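(* Suppose that a germ $\hat\varphi\in\mathbb{C}\{\zeta\}$ can be analytically continued along a path $\gamma:[0,t_*]\to\mathbb{C}$ belonging to $\Pi$, and let $F$ be a finite subset of $\mathbb{C}$. Then for each $\varepsilon>0$ there exists a path $\gamma^*:[0,t_*]\to\mathbb{C}$ belonging to $\Pi$ such that: $\gamma^*((0,t_* ))\subset\mathbb{C}\setminus F$; $L(\gamma^* )<L(\gamma)+\varepsilon$; $\gamma^*(t_* )=\gamma(t_* )$, the germ $\hat\varphi$ can be analytically continued along $\gamma^*$, and the analytic continuations of $\hat\varphi$ along $\gamma$ and along $\gamma^*$ coincide.
   Context: $\Pi$ denotes the set of all Lipschitz paths $\gamma:[0,t_*]\to\mathbb{C}$, with some real $t_*\ge0$ depending on $\gamma$, such that $\gamma(0)=0$. $L(\gamma)$ denotes the length of a path $\gamma$. *)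

theory Defs
  imports "HOL-Analysis.Analysis"
begin

definition in_Pi :: "(real \<Rightarrow> complex) \<Rightarrow> real \<Rightarrow> bool" where
  "in_Pi \<gamma> T \<longleftrightarrow> 0 \<le> T \<and> (\<exists>C. C-lipschitz_on {0..T} \<gamma>) \<and> \<gamma> 0 = 0"

definition path_len :: "(real \<Rightarrow> complex) \<Rightarrow> real \<Rightarrow> real" where
  "path_len \<gamma> T = (SUP p \<in> {(n, t). (n::nat) > 0 \<and> t 0 = (0::real) \<and> t n = T \<and>
        (\<forall>i<n. t i \<le> t (Suc i))}.
      (\<Sum>i<fst p. norm (\<gamma> (snd p (Suc i)) - \<gamma> (snd p i))))"

text \<open>Analytic continuation of the germ at 0 of phi along gamma on [0,T], ending with the
  germ at gamma T of psi: a family of holomorphic function elements (f t, disc of radius r t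
  around gamma t), locally compatible along the path, starting with the germ of phi and
  ending with the germ of psi.\<close>
definition ac_along ::
  "(complex \<Rightarrow> complex) \<Rightarrow> (real \<Rightarrow> complex) \<Rightarrow> real \<Rightarrow> (complex \<Rightarrow> complex) \<Rightarrow> bool" where
  "ac_along \<phi> \<gamma> T \<psi> \<longleftrightarrow>
     (\<exists>f :: real \<Rightarrow> complex \<Rightarrow> complex. \<exists>r :: real \<Rightarrow> real.
        (\<forall>t\<in>{0..T}. 0 < r t \<and> f t holomorphic_on ball (\<gamma> t) (r t)) \<and>
        (\<forall>t\<in>{0..T}. \<exists>\<delta>>0. \<forall>s\<in>{0..T}. \<bar>s - t\<bar> < \<delta> \<longrightarrow>
            \<gamma> s \<in> ball (\<gamma> t) (r t) \<and> (\<forall>\<^sub>F z in nhds (\<gamma> s). f s z = f t z)) \<and>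
        (\<forall>\<^sub>F z in nhds (\<gamma> 0). f 0 z = \<phi> z) \<and>
        (\<forall>\<^sub>F z in nhds (\<gamma> T). f T z = \<psi> z))"

end

theory Submission
  imports Defs "HOL-Complex_Analysis.Complex_Analysis"
begin

text \<open>Perturb \<gamma> by the bump \<open>c \<cdot> t (T - t)\<close>, which fixes both endpoints. Analytic
  continuation along a path survives every uniformly small perturbation with the same endpoints
  (a Lebesgue number of the compact graph of \<gamma> gives a uniform disc size), and the length
  grows by at most \<open>|c| T\<^sup>2\<close>. For \<open>p \<in> F\<close>, the coefficients \<open>c\<close> with
  \<open>\<gamma> t + c \<cdot> t (T - t) = p\<close> for some \<open>t \<in> (0, T)\<close> form the image of \<open>(0, T)\<close> under the
  locally Lipschitz map \<open>t \<mapsto> (p - \<gamma> t) / (t (T - t))\<close>, a null set in \<open>\<complex>\<close>; so arbitrarily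
  small admissible \<open>c\<close> exist.\<close>

lemma holomorphic_eq_on_Int_balls:
  fixes f g :: "complex \<Rightarrow> complex"
  assumes "f holomorphic_on ball a r" "g holomorphic_on ball b s"
    and "z0 \<in> ball a r \<inter> ball b s" "\<forall>\<^sub>F z in nhds z0. f z = g z"
    and "z \<in> ball a r \<inter> ball b s"
  shows "f z = g z"
proof -
  obtain U where U: "open U" "z0 \<in> U" "\<And>z. z \<in> U \<Longrightarrow> f z = g z"
    using assms(4) unfolding eventually_nhds by blast
  show ?thesis
  proof (rule analytic_continuation_open[of "U \<inter> (ball a r \<inter> ball b s)" "ball a r \<inter> ball b s" f g])
    show "connected (ball a r \<inter> ball b s)"
      by (intro convex_connected convex_Int convex_ball)
    show "f holomorphic_on ball a r \<inter> ball b s" "g holomorphic_on ball a r \<inter> ball b s"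
      using assms(1,2) holomorphic_on_subset by blast+
  qed (use U assms(3,5) in auto)
qed

lemma lebesgue_number_along_path:
  fixes \<gamma> :: "real \<Rightarrow> 'a::metric_space"
  assumes cont: "continuous_on {0..T} \<gamma>" and pos: "\<And>t. t \<in> {0..T} \<Longrightarrow> 0 < \<delta> t \<and> 0 < r t"
  obtains e \<tau> where "0 < e"
    "\<forall>s\<in>{0..T}. \<tau> s \<in> {0..T} \<and> ball (\<gamma> s) e \<subseteq> ball (\<gamma> (\<tau> s)) (r (\<tau> s)) \<and>
        (\<forall>t. \<bar>t - s\<bar> < e \<longrightarrow> \<bar>t - \<tau> s\<bar> < \<delta> (\<tau> s))"
proof -
  let ?K = "(\<lambda>s. (s, \<gamma> s)) ` {0..T}"
  let ?V = "\<lambda>a. ball a (\<delta> a) \<times> ball (\<gamma> a) (r a)"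
  have "compact ?K"
    by (intro compact_continuous_image continuous_on_Pair continuous_on_id cont) simp
  moreover have "?K \<subseteq> \<Union> (?V ` {0..T})"
    using pos by force
  ultimately obtain e where e: "0 < e" and cov: "\<And>x. x \<in> ?K \<Longrightarrow> \<exists>V \<in> ?V ` {0..T}. ball x e \<subseteq> V"
    by (rule Heine_Borel_lemma) (auto intro: open_Times)
  have "\<exists>a \<in> {0..T}. ball (\<gamma> s) e \<subseteq> ball (\<gamma> a) (r a) \<and> (\<forall>t. \<bar>t - s\<bar> < e \<longrightarrow> \<bar>t - a\<bar> < \<delta> a)"
    if s: "s \<in> {0..T}" for s
  proof -
    obtain a where a: "a \<in> {0..T}" and sub: "ball (s, \<gamma> s) e \<subseteq> ?V a"
      using cov[of "(s, \<gamma> s)"] s by blast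
    have "ball (\<gamma> s) e \<subseteq> ball (\<gamma> a) (r a)"
    proof
      fix z assume "z \<in> ball (\<gamma> s) e"
      then have "(s, z) \<in> ball (s, \<gamma> s) e" by (simp add: dist_Pair_Pair)
      then show "z \<in> ball (\<gamma> a) (r a)" using sub by blast
    qed
    moreover have "\<bar>t - a\<bar> < \<delta> a" if "\<bar>t - s\<bar> < e" for t
    proof -
      have "(t, \<gamma> s) \<in> ball (s, \<gamma> s) e"
        using that by (simp add: dist_Pair_Pair dist_real_def abs_minus_commute)
      then show ?thesis using sub by (auto simp: dist_real_def abs_minus_commute)
    qed
    ultimately show ?thesis using a by blast
  qed
  then obtain \<tau> where "\<forall>s\<in>{0..T}. \<tau> s \<in> {0..T} \<and> ball (\<gamma> s) e \<subseteq> ball (\<gamma> (\<tau> s)) (r (\<tau> s)) \<and>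
        (\<forall>t. \<bar>t - s\<bar> < e \<longrightarrow> \<bar>t - \<tau> s\<bar> < \<delta> (\<tau> s))"
    by metis
  with e that show ?thesis by blast
qed

lemma ac_along_uniform_discs:
  assumes ac: "ac_along \<phi> \<gamma> T \<psi>" and T0: "0 \<le> T" and cont: "continuous_on {0..T} \<gamma>"
  obtains g :: "real \<Rightarrow> complex \<Rightarrow> complex" and c \<rho> e where "0 < e"
    "\<forall>s\<in>{0..T}. g s holomorphic_on ball (c s) (\<rho> s) \<and> ball (\<gamma> s) e \<subseteq> ball (c s) (\<rho> s)"
    "\<forall>s\<in>{0..T}. \<forall>t\<in>{0..T}. \<bar>t - s\<bar> < e \<longrightarrow>
       (\<forall>z \<in> ball (c s) (\<rho> s) \<inter> ball (c t) (\<rho> t). g s z = g t z)"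
    "\<forall>\<^sub>F z in nhds (\<gamma> 0). g 0 z = \<phi> z" "\<forall>\<^sub>F z in nhds (\<gamma> T). g T z = \<psi> z"
proof -
  obtain f r where hol: "\<forall>t\<in>{0..T}. 0 < r t \<and> f t holomorphic_on ball (\<gamma> t) (r t)"
    and comp: "\<forall>t\<in>{0..T}. \<exists>\<delta>>0. \<forall>s\<in>{0..T}. \<bar>s - t\<bar> < \<delta> \<longrightarrow>
            \<gamma> s \<in> ball (\<gamma> t) (r t) \<and> (\<forall>\<^sub>F z in nhds (\<gamma> s). f s z = f t z)"
    and start: "\<forall>\<^sub>F z in nhds (\<gamma> 0). f 0 z = \<phi> z" and finish: "\<forall>\<^sub>F z in nhds (\<gamma> T). f T z = \<psi> z"
    using ac unfolding ac_along_def by blast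
  obtain \<delta> where \<delta>: "\<And>t. t \<in> {0..T} \<Longrightarrow> 0 < \<delta> t \<and> (\<forall>s\<in>{0..T}. \<bar>s - t\<bar> < \<delta> t \<longrightarrow>
            \<gamma> s \<in> ball (\<gamma> t) (r t) \<and> (\<forall>\<^sub>F z in nhds (\<gamma> s). f s z = f t z))"
    using comp by metis
  have pos: "\<And>t. t \<in> {0..T} \<Longrightarrow> 0 < \<delta> t \<and> 0 < r t"
    using \<delta> hol by blast
  obtain e \<tau> where e: "0 < e" and \<tau>: "\<forall>s\<in>{0..T}. \<tau> s \<in> {0..T} \<and>
      ball (\<gamma> s) e \<subseteq> ball (\<gamma> (\<tau> s)) (r (\<tau> s)) \<and> (\<forall>t. \<bar>t - s\<bar> < e \<longrightarrow> \<bar>t - \<tau> s\<bar> < \<delta> (\<tau> s))"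
    using lebesgue_number_along_path[where \<delta>=\<delta> and r=r, OF cont pos] by blast
  note \<tau> = bspec[OF \<tau>]
  have near: "\<gamma> t \<in> ball (\<gamma> (\<tau> s)) (r (\<tau> s)) \<and> (\<forall>\<^sub>F z in nhds (\<gamma> t). f t z = f (\<tau> s) z)"
    if "s \<in> {0..T}" "t \<in> {0..T}" "\<bar>t - s\<bar> < e" for s t
    using \<tau>[OF that(1)] \<delta>[of "\<tau> s"] that by blast
  have agree: "f (\<tau> s) z = f (\<tau> t) z"
    if st: "s \<in> {0..T}" "t \<in> {0..T}" "\<bar>t - s\<bar> < e"
      and z: "z \<in> ball (\<gamma> (\<tau> s)) (r (\<tau> s)) \<inter> ball (\<gamma> (\<tau> t)) (r (\<tau> t))" for s t z
  proof (rule holomorphic_eq_on_Int_balls[OF _ _ _ _ z])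
    show "f (\<tau> s) holomorphic_on ball (\<gamma> (\<tau> s)) (r (\<tau> s))"
      "f (\<tau> t) holomorphic_on ball (\<gamma> (\<tau> t)) (r (\<tau> t))"
      using hol \<tau> st by blast+
    show "\<gamma> t \<in> ball (\<gamma> (\<tau> s)) (r (\<tau> s)) \<inter> ball (\<gamma> (\<tau> t)) (r (\<tau> t))"
      using near[of s t] near[of t t] st e by auto
    have "\<forall>\<^sub>F z in nhds (\<gamma> t). f t z = f (\<tau> s) z" "\<forall>\<^sub>F z in nhds (\<gamma> t). f t z = f (\<tau> t) z"
      using near[of s t] near[of t t] st e by auto
    then show "\<forall>\<^sub>F z in nhds (\<gamma> t). f (\<tau> s) z = f (\<tau> t) z"
      by (auto elim: eventually_elim2)
  qed
  show ?thesis
  proof (rule that[of e "\<lambda>s. f (\<tau> s)" "\<lambda>s. \<gamma> (\<tau> s)" "\<lambda>s. r (\<tau> s)"])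
    have "0 \<in> {0..T}" "T \<in> {0..T}" using T0 by auto
    then have ev0: "\<forall>\<^sub>F z in nhds (\<gamma> 0). f 0 z = f (\<tau> 0) z"
      and evT: "\<forall>\<^sub>F z in nhds (\<gamma> T). f T z = f (\<tau> T) z"
      using near[of 0 0] near[of T T] e by auto
    show "\<forall>\<^sub>F z in nhds (\<gamma> 0). f (\<tau> 0) z = \<phi> z"
      using start ev0 by eventually_elim simp
    show "\<forall>\<^sub>F z in nhds (\<gamma> T). f (\<tau> T) z = \<psi> z"
      using finish evT by eventually_elim simp
    show "\<forall>s\<in>{0..T}. f (\<tau> s) holomorphic_on ball (\<gamma> (\<tau> s)) (r (\<tau> s)) \<and>
        ball (\<gamma> s) e \<subseteq> ball (\<gamma> (\<tau> s)) (r (\<tau> s))"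
      using hol \<tau> by blast
    show "\<forall>s\<in>{0..T}. \<forall>t\<in>{0..T}. \<bar>t - s\<bar> < e \<longrightarrow> (\<forall>z \<in> ball (\<gamma> (\<tau> s)) (r (\<tau> s)) \<inter>
        ball (\<gamma> (\<tau> t)) (r (\<tau> t)). f (\<tau> s) z = f (\<tau> t) z)"
      using agree by blast
  qed (rule e)
qed

lemma ac_along_stable:
  assumes "ac_along \<phi> \<gamma> T \<psi>" "0 \<le> T" "continuous_on {0..T} \<gamma>"
  obtains \<eta> where "0 < \<eta>"
    "\<And>\<gamma>'. continuous_on {0..T} \<gamma>' \<Longrightarrow> \<gamma>' 0 = \<gamma> 0 \<Longrightarrow> \<gamma>' T = \<gamma> T \<Longrightarrow>
       (\<forall>s\<in>{0..T}. norm (\<gamma>' s - \<gamma> s) < \<eta>) \<Longrightarrow> ac_along \<phi> \<gamma>' T \<psi>"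
proof -
  obtain g :: "real \<Rightarrow> complex \<Rightarrow> complex" and c \<rho> e where e: "0 < e"
    and discs: "\<forall>s\<in>{0..T}. g s holomorphic_on ball (c s) (\<rho> s) \<and> ball (\<gamma> s) e \<subseteq> ball (c s) (\<rho> s)"
    and agree: "\<forall>s\<in>{0..T}. \<forall>t\<in>{0..T}. \<bar>t - s\<bar> < e \<longrightarrow>
       (\<forall>z \<in> ball (c s) (\<rho> s) \<inter> ball (c t) (\<rho> t). g s z = g t z)"
    and start: "\<forall>\<^sub>F z in nhds (\<gamma> 0). g 0 z = \<phi> z" and finish: "\<forall>\<^sub>F z in nhds (\<gamma> T). g T z = \<psi> z"
    by (rule ac_along_uniform_discs[OF assms])
  show ?thesis
  proof (rule that[OF e])
    fix \<gamma>' :: "real \<Rightarrow> complex"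
    assume cont': "continuous_on {0..T} \<gamma>'" and \<gamma>'0: "\<gamma>' 0 = \<gamma> 0" and \<gamma>'T: "\<gamma>' T = \<gamma> T"
      and close: "\<forall>s\<in>{0..T}. norm (\<gamma>' s - \<gamma> s) < e"
    define r' where "r' s = e - norm (\<gamma>' s - \<gamma> s)" for s
    have r': "0 < r' s" if "s \<in> {0..T}" for s
      using close that by (simp add: r'_def)
    have balls: "ball (\<gamma>' s) (r' s) \<subseteq> ball (c s) (\<rho> s)" if s: "s \<in> {0..T}" for s
    proof -
      have "ball (\<gamma>' s) (r' s) \<subseteq> ball (\<gamma> s) e"
        by (rule ball_subset_ball_iff[THEN iffD2]) (simp add: r'_def dist_norm norm_minus_commute)
      then show ?thesis using discs s by blast
    qed
    show "ac_along \<phi> \<gamma>' T \<psi>"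
      unfolding ac_along_def
    proof (intro exI[of _ g] exI[of _ r'] conjI ballI)
      fix t assume t: "t \<in> {0..T}"
      show "0 < r' t" using r'[OF t] .
      show "g t holomorphic_on ball (\<gamma>' t) (r' t)"
        using discs t balls[OF t] holomorphic_on_subset by blast
      obtain d where d: "0 < d" "\<And>s. s \<in> {0..T} \<Longrightarrow> dist s t < d \<Longrightarrow> dist (\<gamma>' s) (\<gamma>' t) < r' t"
        using cont' t r'[OF t] unfolding continuous_on_iff by metis
      show "\<exists>\<delta>>0. \<forall>s\<in>{0..T}. \<bar>s - t\<bar> < \<delta> \<longrightarrow> \<gamma>' s \<in> ball (\<gamma>' t) (r' t) \<and>
              (\<forall>\<^sub>F z in nhds (\<gamma>' s). g s z = g t z)"
      proof (intro exI[of _ "min d e"] conjI ballI impI)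
        fix s assume s: "s \<in> {0..T}" and st: "\<bar>s - t\<bar> < min d e"
        show in_t: "\<gamma>' s \<in> ball (\<gamma>' t) (r' t)"
          using d(2)[OF s] st by (simp add: dist_real_def dist_commute)
        have "\<gamma>' s \<in> ball (c s) (\<rho> s) \<inter> ball (c t) (\<rho> t)"
          using balls[OF s] balls[OF t] centre_in_ball[THEN iffD2, OF r'[OF s]] in_t by blast
        moreover have "\<forall>z \<in> ball (c s) (\<rho> s) \<inter> ball (c t) (\<rho> t). g s z = g t z"
          using agree s t st by simp
        ultimately show "\<forall>\<^sub>F z in nhds (\<gamma>' s). g s z = g t z"
          unfolding eventually_nhds by (meson open_Int open_ball)
      qed (simp add: d e)
    next
      show "\<forall>\<^sub>F z in nhds (\<gamma>' 0). g 0 z = \<phi> z" "\<forall>\<^sub>F z in nhds (\<gamma>' T). g T z = \<psi> z"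
        unfolding \<gamma>'0 \<gamma>'T by (fact start finish)+
    qed
  qed
qed

definition partitions :: "real \<Rightarrow> (nat \<times> (nat \<Rightarrow> real)) set" where
  "partitions T = {(n, t). 0 < n \<and> t 0 = 0 \<and> t n = T \<and> (\<forall>i<n. t i \<le> t (Suc i))}"

definition polygon_len :: "(real \<Rightarrow> 'a::real_normed_vector) \<Rightarrow> nat \<times> (nat \<Rightarrow> real) \<Rightarrow> real" where
  "polygon_len \<gamma> p = (\<Sum>i<fst p. norm (\<gamma> (snd p (Suc i)) - \<gamma> (snd p i)))"

lemma path_len_eq_SUP_polygon_len: "path_len \<gamma> T = (SUP p \<in> partitions T. polygon_len \<gamma> p)"
  by (simp add: path_len_def partitions_def polygon_len_def)

lemma partitions_nonempty: "0 \<le> T \<Longrightarrow> partitions T \<noteq> {}"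
proof -
  assume "0 \<le> T"
  then have "(1, \<lambda>i::nat. if i = 0 then 0 else T) \<in> partitions T"
    by (simp add: partitions_def)
  then show ?thesis by blast
qed

lemma partition_point_mem:
  assumes p: "(n, t) \<in> partitions T" and "i \<le> n"
  shows "t i \<in> {0..T}"
proof -
  have mono: "t i \<le> t j" if "i \<le> j" "j \<le> n" for i j
    using that
  proof (induction j rule: dec_induct)
    case (step m)
    then have "t i \<le> t m" and "t m \<le> t (Suc m)"
      using p by (auto simp: partitions_def)
    then show ?case by linarith
  qed simp
  show ?thesis
    using mono[of 0 i] mono[of i n] assms by (auto simp: partitions_def)
qed

lemma polygon_len_le_lipschitz:
  assumes lip: "L-lipschitz_on {0..T} g" and p: "p \<in> partitions T"
  shows "polygon_len g p \<le> L * T"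
proof -
  obtain n t where nt: "p = (n, t)" by (cases p)
  have t: "t 0 = 0" "t n = T" "\<forall>i<n. t i \<le> t (Suc i)"
    using p nt by (auto simp: partitions_def)
  have "polygon_len g p \<le> (\<Sum>i<n. L * (t (Suc i) - t i))"
    unfolding polygon_len_def nt fst_conv snd_conv
  proof (rule sum_mono)
    fix i assume "i \<in> {..<n}"
    then have "norm (g (t (Suc i)) - g (t i)) \<le> L * norm (t (Suc i) - t i)"
      using p nt by (intro lipschitz_on_normD[OF lip] partition_point_mem) auto
    then show "norm (g (t (Suc i)) - g (t i)) \<le> L * (t (Suc i) - t i)"
      using t(3) \<open>i \<in> {..<n}\<close> by simp
  qed
  also have "\<dots> = L * T"
    by (simp add: sum_distrib_left[symmetric] sum_lessThan_telescope t)
  finally show ?thesis .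
qed

lemma path_len_le_lipschitz:
  assumes "L-lipschitz_on {0..T} h" "0 \<le> T"
  shows "path_len h T \<le> L * T"
  unfolding path_len_eq_SUP_polygon_len
  using assms by (intro cSUP_least partitions_nonempty polygon_len_le_lipschitz)

lemma polygon_len_le_path_len:
  assumes "C-lipschitz_on {0..T} \<gamma>" "p \<in> partitions T"
  shows "polygon_len \<gamma> p \<le> path_len \<gamma> T"
  unfolding path_len_eq_SUP_polygon_len
  using assms by (intro cSUP_upper bdd_aboveI2[where M="C * T"] polygon_len_le_lipschitz)

lemma polygon_len_add_le: "polygon_len (\<lambda>t. \<gamma> t + h t) p \<le> polygon_len \<gamma> p + polygon_len h p"
  unfolding polygon_len_def sum.distrib[symmetric]
  by (intro sum_mono) (rule norm_diff_triangle_ineq)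

lemma path_len_add_le:
  assumes "C-lipschitz_on {0..T} \<gamma>" "L-lipschitz_on {0..T} h" "0 \<le> T"
  shows "path_len (\<lambda>t. \<gamma> t + h t) T \<le> path_len \<gamma> T + path_len h T"
  unfolding path_len_eq_SUP_polygon_len[of "\<lambda>t. \<gamma> t + h t"]
proof (rule cSUP_least[OF partitions_nonempty[OF \<open>0 \<le> T\<close>]])
  fix p assume "p \<in> partitions T"
  then show "polygon_len (\<lambda>t. \<gamma> t + h t) p \<le> path_len \<gamma> T + path_len h T"
    using polygon_len_add_le[of \<gamma> h p] polygon_len_le_path_len assms by (meson add_mono order_trans)
qed

lemma lipschitz_on_bump:
  fixes c :: complex
  assumes "0 \<le> T"
  shows "(norm c * T)-lipschitz_on {0..T} (\<lambda>t. c * of_real (t * (T - t)))"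
proof (rule lipschitz_onI)
  fix x y assume x: "x \<in> {0..T}" and y: "y \<in> {0..T}"
  have "x * (T - x) - y * (T - y) = (x - y) * (T - x - y)"
    by (simp add: algebra_simps)
  moreover have "\<bar>T - x - y\<bar> \<le> T"
    using x y by auto
  ultimately have "\<bar>x * (T - x) - y * (T - y)\<bar> \<le> \<bar>x - y\<bar> * T"
    by (simp add: abs_mult mult_left_mono)
  then have "norm c * \<bar>x * (T - x) - y * (T - y)\<bar> \<le> norm c * (\<bar>x - y\<bar> * T)"
    by (simp add: mult_left_mono)
  moreover have "c * of_real (x * (T - x)) - c * of_real (y * (T - y)) = c * of_real (x * (T - x) - y * (T - y))"
    by (simp only: of_real_diff right_diff_distrib)
  ultimately show "dist (c * of_real (x * (T - x))) (c * of_real (y * (T - y))) \<le> norm c * T * dist x y"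
    by (simp only: dist_norm norm_mult norm_of_real) (simp add: dist_real_def mult_ac)
qed (use assms in simp)

lemma lipschitz_on_divide:
  fixes f g :: "'a::metric_space \<Rightarrow> 'b::real_normed_field"
  assumes f: "A-lipschitz_on U f" and g: "B-lipschitz_on U g"
    and f_le: "\<And>x. x \<in> U \<Longrightarrow> norm (f x) \<le> M" and g_ge: "\<And>x. x \<in> U \<Longrightarrow> m \<le> norm (g x)"
    and "0 \<le> M" "0 < m"
  shows "(A / m + M * B / m\<^sup>2)-lipschitz_on U (\<lambda>x. f x / g x)"
proof (rule lipschitz_onI)
  have A: "0 \<le> A" and B: "0 \<le> B"
    using f g by (auto intro: lipschitz_on_nonneg)
  then show "0 \<le> A / m + M * B / m\<^sup>2"
    using \<open>0 \<le> M\<close> \<open>0 < m\<close> by simp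
  fix x y assume x: "x \<in> U" and y: "y \<in> U"
  have gx: "m \<le> norm (g x)" and gy: "m \<le> norm (g y)"
    using g_ge x y by auto
  then have "g x \<noteq> 0" "g y \<noteq> 0"
    using \<open>0 < m\<close> by auto
  then have "f x / g x - f y / g y = (f x - f y) / g x + f y * (g y - g x) / (g x * g y)"
    by (simp add: field_simps)
  then have "dist (f x / g x) (f y / g y)
      \<le> norm (f x - f y) / norm (g x) + norm (f y) * norm (g y - g x) / (norm (g x) * norm (g y))"
    by (metis dist_norm norm_divide norm_mult norm_triangle_ineq)
  also have "\<dots> \<le> A * dist x y / m + M * (B * dist x y) / (m * m)"
  proof (rule add_mono)
    have fxy: "norm (f x - f y) \<le> A * dist x y" and gyx: "norm (g y - g x) \<le> B * dist x y"
      using lipschitz_onD[OF f x y] lipschitz_onD[OF g y x] by (simp_all add: dist_norm dist_commute)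
    show "norm (f x - f y) / norm (g x) \<le> A * dist x y / m"
      by (rule frac_le) (use fxy gx A \<open>0 < m\<close> in auto)
    show "norm (f y) * norm (g y - g x) / (norm (g x) * norm (g y)) \<le> M * (B * dist x y) / (m * m)"
      by (rule frac_le) (use f_le[OF y] gyx gx gy B \<open>0 \<le> M\<close> \<open>0 < m\<close> in \<open>auto intro: mult_mono\<close>)
  qed
  also have "\<dots> = (A / m + M * B / m\<^sup>2) * dist x y"
    by (simp add: field_simps power2_eq_square)
  finally show "dist (f x / g x) (f y / g y) \<le> (A / m + M * B / m\<^sup>2) * dist x y" .
qed

lemma negligible_locally_lipschitz_image_real:
  fixes f :: "real \<Rightarrow> complex"
  assumes lip: "\<And>x. x \<in> S \<Longrightarrow> \<exists>U B. open U \<and> x \<in> U \<and> B-lipschitz_on (S \<inter> U) f"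
  shows "negligible (f ` S)"
proof -
  have "f ` S = (f \<circ> Re) ` (of_real ` S)"
    by (simp add: image_image)
  also have "negligible \<dots>"
  proof (rule negligible_locally_Lipschitz_image)
    show "DIM(complex) \<le> DIM(complex)" by simp
    show "negligible (complex_of_real ` S)"
      by (rule negligible_subset[OF negligible_standard_hyperplane[of \<i> 0]])
        (auto simp: Basis_complex_def inner_complex_def)
    fix z :: complex assume "z \<in> of_real ` S"
    then obtain x where x: "x \<in> S" and z: "z = of_real x" by blast
    obtain U B where U: "open U" "x \<in> U" and B: "B-lipschitz_on (S \<inter> U) f"
      using lip[OF x] by blast
    have "norm ((f \<circ> Re) w - (f \<circ> Re) z) \<le> B * norm (w - z)" if "w \<in> of_real ` S \<inter> Re -` U" for w
      using lipschitz_on_normD[OF B, of "Re w" x] that x U z by (auto simp flip: of_real_diff)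
    moreover have "open (Re -` U)"
      using U by (intro open_vimage continuous_on_Re continuous_on_id) auto
    ultimately show "\<exists>V B. open V \<and> z \<in> V \<and>
        (\<forall>w \<in> of_real ` S \<inter> V. norm ((f \<circ> Re) w - (f \<circ> Re) z) \<le> B * norm (w - z))"
      using U z by (intro exI[of _ "Re -` U"] exI[of _ B]) auto
  qed
  finally show ?thesis .
qed

lemma locally_lipschitz_bump_quotient:
  fixes \<gamma> :: "real \<Rightarrow> complex"
  assumes lip: "C-lipschitz_on {0..T} \<gamma>" and t: "t \<in> {0<..<T}"
  shows "\<exists>U B. open U \<and> t \<in> U \<and> B-lipschitz_on ({0<..<T} \<inter> U) (\<lambda>s. (p - \<gamma> s) / of_real (s * (T - s)))"
proof -
  let ?U = "{t / 2 <..< (t + T) / 2}"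
  let ?K = "{0<..<T} \<inter> ?U"
  define m where "m = t / 2 * ((T - t) / 2)"
  have K: "?K \<subseteq> {0..T}" by auto
  have "0 < m" using t by (simp add: m_def)
  have num: "C-lipschitz_on ?K (\<lambda>s. p - \<gamma> s)"
    using lipschitz_on_diff[OF lipschitz_on_constant lipschitz_on_subset[OF lip K]] by simp
  have den: "T-lipschitz_on ?K (\<lambda>s. complex_of_real (s * (T - s)))"
    using lipschitz_on_subset[OF lipschitz_on_bump[of T 1] K] t by simp
  have num_le: "norm (p - \<gamma> s) \<le> norm p + norm (\<gamma> 0) + C * T" if s: "s \<in> ?K" for s
  proof -
    have "norm (\<gamma> s - \<gamma> 0) \<le> C * T"
      using lipschitz_on_normD[OF lip, of s 0] lipschitz_on_nonneg[OF lip] s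
      by (force intro: order_trans mult_left_mono)
    then show ?thesis
      using norm_triangle_ineq4[of p "\<gamma> s"] norm_triangle_sub[of "\<gamma> s" "\<gamma> 0"] by linarith
  qed
  have den_ge: "m \<le> norm (complex_of_real (s * (T - s)))" if s: "s \<in> ?K" for s
  proof -
    have "m \<le> s * (T - s)"
      unfolding m_def using s t by (intro mult_mono) auto
    then show ?thesis
      unfolding norm_of_real using abs_ge_self[of "s * (T - s)"] by linarith
  qed
  have "0 \<le> norm p + norm (\<gamma> 0) + C * T"
    using lipschitz_on_nonneg[OF lip] t by simp
  then have "(C / m + (norm p + norm (\<gamma> 0) + C * T) * T / m\<^sup>2)-lipschitz_on ?K
      (\<lambda>s. (p - \<gamma> s) / of_real (s * (T - s)))"
    using lipschitz_on_divide[OF num den num_le den_ge] \<open>0 < m\<close> by blast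
  then show ?thesis
    using t by (intro exI[of _ ?U] exI) auto
qed

lemma exists_small_avoiding_bump:
  fixes \<gamma> :: "real \<Rightarrow> complex"
  assumes lip: "C-lipschitz_on {0..T} \<gamma>" and "finite F" and "0 < \<rho>"
  obtains c where "norm c < \<rho>" "\<And>t. t \<in> {0<..<T} \<Longrightarrow> \<gamma> t + c * of_real (t * (T - t)) \<notin> F"
proof -
  define bad where "bad p = (\<lambda>t. (p - \<gamma> t) / of_real (t * (T - t))) ` {0<..<T}" for p
  have "negligible (bad p)" for p
    unfolding bad_def
    by (rule negligible_locally_lipschitz_image_real) (rule locally_lipschitz_bump_quotient[OF lip])
  then have "negligible (\<Union>p\<in>F. bad p)"
    using \<open>finite F\<close> by (intro negligible_Union) auto
  then have "\<not> ball 0 \<rho> \<subseteq> (\<Union>p\<in>F. bad p)"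
    using negligible_subset open_not_negligible[of "ball 0 \<rho>"] \<open>0 < \<rho>\<close> by auto
  then obtain c where c: "norm c < \<rho>" "c \<notin> (\<Union>p\<in>F. bad p)"
    by (auto simp: subset_iff)
  show ?thesis
  proof (rule that[OF c(1)])
    fix t assume t: "t \<in> {0<..<T}"
    then have "c = (\<gamma> t + c * of_real (t * (T - t)) - \<gamma> t) / of_real (t * (T - t))"
      by simp
    then show "\<gamma> t + c * of_real (t * (T - t)) \<notin> F"
      using c(2) t unfolding bad_def by blast
  qed
qed

lemma exists_lipschitz_bump_avoiding:
  fixes \<gamma> :: "real \<Rightarrow> complex"
  assumes lip: "C-lipschitz_on {0..T} \<gamma>" and "0 \<le> T" "finite F" "0 < e"
  obtains h L where "L-lipschitz_on {0..T} h" "L * T < e" "h 0 = 0" "h T = 0"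
    "\<And>t. t \<in> {0<..<T} \<Longrightarrow> \<gamma> t + h t \<notin> F"
proof -
  have "0 < T * T + 1"
    by (simp add: add_nonneg_pos)
  then obtain c where c: "norm c < e / (T * T + 1)"
    and avoid: "\<And>t. t \<in> {0<..<T} \<Longrightarrow> \<gamma> t + c * of_real (t * (T - t)) \<notin> F"
    using exists_small_avoiding_bump[OF lip \<open>finite F\<close> divide_pos_pos[OF \<open>0 < e\<close>]] by blast
  have "norm c * T * T \<le> norm c * (T * T + 1)"
    unfolding mult.assoc by (intro mult_left_mono) auto
  also have "\<dots> < e"
    using c \<open>0 < T * T + 1\<close> by (simp add: pos_less_divide_eq)
  finally have "norm c * T * T < e" .
  then show ?thesis
    by (rule that[OF lipschitz_on_bump[OF \<open>0 \<le> T\<close>] _ _ _ avoid]) simp_all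
qed

theorem lemma2p14:
  fixes \<phi> \<psi> :: "complex \<Rightarrow> complex" and \<gamma> :: "real \<Rightarrow> complex" and T :: real
    and F :: "complex set" and \<epsilon> :: real
  assumes "\<exists>\<rho>>0. \<phi> holomorphic_on ball 0 \<rho>"
    and "in_Pi \<gamma> T"
    and "ac_along \<phi> \<gamma> T \<psi>"
    and "finite F"
    and "\<epsilon> > 0"
  shows "\<exists>\<gamma>'. in_Pi \<gamma>' T \<and> \<gamma>' ` {0<..<T} \<subseteq> - F \<and> path_len \<gamma>' T < path_len \<gamma> T + \<epsilon> \<and>
           \<gamma>' T = \<gamma> T \<and> ac_along \<phi> \<gamma>' T \<psi>"
proof -
  obtain C where T0: "0 \<le> T" and lip: "C-lipschitz_on {0..T} \<gamma>" and \<gamma>0: "\<gamma> 0 = 0"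
    using assms(2) unfolding in_Pi_def by blast
  obtain \<eta> where "0 < \<eta>" and stable: "\<And>\<gamma>'. continuous_on {0..T} \<gamma>' \<Longrightarrow> \<gamma>' 0 = \<gamma> 0 \<Longrightarrow>
      \<gamma>' T = \<gamma> T \<Longrightarrow> (\<forall>s\<in>{0..T}. norm (\<gamma>' s - \<gamma> s) < \<eta>) \<Longrightarrow> ac_along \<phi> \<gamma>' T \<psi>"
    using ac_along_stable[OF assms(3) T0 lipschitz_on_continuous_on[OF lip]] by blast
  have "0 < min \<eta> \<epsilon>" using \<open>0 < \<eta>\<close> \<open>0 < \<epsilon>\<close> by simp
  then obtain h L where hlip: "L-lipschitz_on {0..T} h" and L: "L * T < min \<eta> \<epsilon>"
    and h0: "h 0 = 0" and hT: "h T = 0" and avoid: "\<And>t. t \<in> {0<..<T} \<Longrightarrow> \<gamma> t + h t \<notin> F"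
    using exists_lipschitz_bump_avoiding[OF lip T0 assms(4)] by blast
  have small: "norm (h s) < \<eta>" if "s \<in> {0..T}" for s
  proof -
    have "norm (h s) \<le> L * s"
      using lipschitz_on_normD[OF hlip that, of 0] h0 that by simp
    also have "\<dots> \<le> L * T"
      using that lipschitz_on_nonneg[OF hlip] by (simp add: mult_left_mono)
    finally show ?thesis using L by linarith
  qed
  have lip': "(C + L)-lipschitz_on {0..T} (\<lambda>t. \<gamma> t + h t)"
    by (rule lipschitz_on_add[OF lip hlip])
  have "path_len (\<lambda>t. \<gamma> t + h t) T \<le> path_len \<gamma> T + L * T"
    using path_len_add_le[OF lip hlip T0] path_len_le_lipschitz[OF hlip T0] by linarith
  moreover have "ac_along \<phi> (\<lambda>t. \<gamma> t + h t) T \<psi>"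
    by (rule stable) (use lipschitz_on_continuous_on[OF lip'] h0 hT small in auto)
  ultimately show ?thesis
  proof (intro exI[of _ "\<lambda>t. \<gamma> t + h t"] conjI)
    show "in_Pi (\<lambda>t. \<gamma> t + h t) T"
      using lip' T0 \<gamma>0 h0 unfolding in_Pi_def by auto
  qed (use avoid hT L in auto)
qed

end
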